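(* Let $X$ be a Banach space, $F$ a Banach lattice, and let $(T_n)$ be a sequence of limitedly L-weakly compact operators from $X$ to $F$ converging in operator norm to an operator $T:X\to F$. Then $T$ is limitedly L-weakly compact.
   Context: All vector spaces are real and operators are linear and bounded. For a subset $A$ of a Banach lattice $F$, $\mathrm{sol}(A)=\bigcup_{a\in A}[-|a|,|a|]$. A subset $A\subseteq F$ is an Lwc-set if every disjoint sequence in $\mathrm{sol}(A)$ is norm-null. A bounded subset $A$ of a Banach space $X$ is limited if every weak$^\ast$-null sequence in $X'$ converges to $0$ uniformly on $A$. An operator $T:X\to F$ is limitedly L-weakly compact if $T$ maps every limited subset of $X$ onto an Lwc-subset of $F$. *)

theory Defs
  imports "HOL-Analysis.Analysis"
begin

definition lat_abs :: "'a::{lattice, uminus} \<Rightarrow> 'a" where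
  "lat_abs x = sup x (- x)"

class banach_lattice = banach + ordered_real_vector + lattice +
  assumes norm_lattice_mono: "sup x (- x) \<le> sup y (- y) \<Longrightarrow> norm x \<le> norm y"

definition sol :: "'a::banach_lattice set \<Rightarrow> 'a set" where
  "sol A = (\<Union>a\<in>A. {- lat_abs a .. lat_abs a})"

definition disjoint_seq :: "(nat \<Rightarrow> 'a::banach_lattice) \<Rightarrow> bool" where
  "disjoint_seq x \<longleftrightarrow> (\<forall>n m. n \<noteq> m \<longrightarrow> inf (lat_abs (x n)) (lat_abs (x m)) = 0)"

definition lwc_set :: "'a::banach_lattice set \<Rightarrow> bool" where
  "lwc_set A \<longleftrightarrow> (\<forall>x. (\<forall>n. x n \<in> sol A) \<and> disjoint_seq x \<longrightarrow> x \<longlonglongrightarrow> 0)"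

definition limited_set :: "'a::banach set \<Rightarrow> bool" where
  "limited_set A \<longleftrightarrow> bounded A \<and>
     (\<forall>f :: nat \<Rightarrow> ('a \<Rightarrow>\<^sub>L real).
        (\<forall>x. (\<lambda>n. blinfun_apply (f n) x) \<longlonglongrightarrow> 0) \<longrightarrow>
        (\<forall>e>0. \<forall>\<^sub>F n in sequentially. \<forall>a\<in>A. \<bar>blinfun_apply (f n) a\<bar> < e))"

definition limitedly_L_weakly_compact :: "('a::banach \<Rightarrow>\<^sub>L 'b::banach_lattice) \<Rightarrow> bool" where
  "limitedly_L_weakly_compact T \<longleftrightarrow>
     (\<forall>A. limited_set A \<longrightarrow> lwc_set (blinfun_apply T ` A))"

end

theory Submission
  imports Defs "HOL-Library.Lattice_Algebras"
begin

text \<open>An Lwc-set stays Lwc under uniform approximation: if every point of \<open>A\<close> is \<open>\<epsilon>\<close>-close to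
  some point of an Lwc-set \<open>B\<close>, and \<open>(x\<^sub>k)\<close> is disjoint with \<open>|x\<^sub>k| \<le> |a\<^sub>k|\<close>, \<open>a\<^sub>k \<in> A\<close>, then the
  truncations \<open>y\<^sub>k = |x\<^sub>k| \<sqinter> |b\<^sub>k|\<close> form a disjoint sequence in \<open>sol B\<close>, hence are norm-null, while
  \<open>0 \<le> |x\<^sub>k| - y\<^sub>k \<le> |a\<^sub>k - b\<^sub>k|\<close> has norm at most \<open>\<epsilon>\<close>. Since \<open>T\<^sub>n \<rightarrow> T\<close> uniformly on the bounded
  set \<open>A\<close>, this applies to \<open>T(A)\<close> and the Lwc-sets \<open>T\<^sub>n(A)\<close>.\<close>

subclass (in banach_lattice) lattice_ab_group_add ..

lemma lat_abs_nonneg: "0 \<le> lat_abs (x::'a::lattice_ab_group_add)"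
proof -
  have "x + - x \<le> lat_abs x + lat_abs x"
    unfolding lat_abs_def by (intro add_mono) auto
  then show ?thesis by simp
qed

lemma lat_abs_of_nonneg: "0 \<le> (x::'a::lattice_ab_group_add) \<Longrightarrow> lat_abs x = x"
  unfolding lat_abs_def by (metis neg_le_0_iff_le order_trans sup.absorb1)

lemma lat_abs_le_iff: "lat_abs (x::'a::lattice_ab_group_add) \<le> c \<longleftrightarrow> - c \<le> x \<and> x \<le> c"
  unfolding lat_abs_def by (auto simp: minus_le_iff)

lemma lat_abs_triangle: "lat_abs ((x::'a::lattice_ab_group_add) + y) \<le> lat_abs x + lat_abs y"
  unfolding lat_abs_le_iff minus_add_distrib
  by (auto intro: add_mono simp: lat_abs_def minus_le_iff)

lemma diff_inf_le:
  fixes x y c :: "'a::lattice_ab_group_add"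
  assumes "0 \<le> c" "x \<le> y + c"
  shows "x - inf x y \<le> c"
proof -
  have "x - inf x y = sup 0 (x - y)"
    by (simp add: diff_inf_eq_sup add_sup_distrib_left)
  with assms show ?thesis by (simp add: diff_le_eq add.commute)
qed

lemma norm_lat_abs [simp]: "norm (lat_abs (x::'a::banach_lattice)) = norm x"
  using norm_lattice_mono[of "lat_abs x" x] norm_lattice_mono[of x "lat_abs x"]
    lat_abs_of_nonneg[OF lat_abs_nonneg[of x]]
  unfolding lat_abs_def by fastforce

lemma norm_le_if_le_lat_abs:
  "0 \<le> (z::'a::banach_lattice) \<Longrightarrow> z \<le> lat_abs w \<Longrightarrow> norm z \<le> norm w"
  using norm_lattice_mono[of z w] lat_abs_of_nonneg[of z] unfolding lat_abs_def by auto

lemma mem_sol_iff: "z \<in> sol A \<longleftrightarrow> (\<exists>a\<in>A. lat_abs z \<le> lat_abs a)"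
  unfolding sol_def by (auto simp: lat_abs_le_iff)

lemma disjoint_seq_dominated:
  assumes "disjoint_seq x" "\<And>k. 0 \<le> y k" "\<And>k. y k \<le> lat_abs (x k)"
  shows "disjoint_seq y"
  unfolding disjoint_seq_def
proof (intro allI impI)
  fix k m :: nat assume "k \<noteq> m"
  have "inf (lat_abs (y k)) (lat_abs (y m)) \<le> inf (lat_abs (x k)) (lat_abs (x m))"
    using assms(2,3) by (auto simp: lat_abs_of_nonneg intro: le_infI1 le_infI2)
  also have "\<dots> = 0" using assms(1) \<open>k \<noteq> m\<close> unfolding disjoint_seq_def by blast
  finally show "inf (lat_abs (y k)) (lat_abs (y m)) = 0"
    by (simp add: order.antisym lat_abs_nonneg)
qed

lemma norm_le_norm_inf_lat_abs_add:
  fixes z a b :: "'a::banach_lattice"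
  assumes "lat_abs z \<le> lat_abs a"
  shows "norm z \<le> norm (inf (lat_abs z) (lat_abs b)) + norm (a - b)"
proof -
  let ?y = "inf (lat_abs z) (lat_abs b)"
  have "lat_abs a \<le> lat_abs b + lat_abs (a - b)"
    using lat_abs_triangle[of b "a - b"] by simp
  with assms have "lat_abs z - ?y \<le> lat_abs (a - b)"
    by (intro diff_inf_le lat_abs_nonneg) simp
  moreover have "0 \<le> lat_abs z - ?y"
    by (metis inf_le1 diff_ge_0_iff_ge)
  ultimately have "norm (lat_abs z - ?y) \<le> norm (a - b)"
    by (intro norm_le_if_le_lat_abs) simp_all
  moreover have "norm z \<le> norm ?y + norm (lat_abs z - ?y)"
    using norm_triangle_ineq[of ?y "lat_abs z - ?y"] by (metis diff_add_cancel add.commute norm_lat_abs)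
  ultimately show ?thesis by linarith
qed

lemma lwc_set_if_approximable:
  fixes A :: "'a::banach_lattice set"
  assumes approx: "\<And>e. e > 0 \<Longrightarrow> \<exists>B. lwc_set B \<and> (\<forall>a\<in>A. \<exists>b\<in>B. norm (a - b) \<le> e)"
  shows "lwc_set A"
  unfolding lwc_set_def
proof (intro allI impI)
  fix x assume "(\<forall>k. x k \<in> sol A) \<and> disjoint_seq x"
  then have x_sol: "\<And>k. x k \<in> sol A" and x_disj: "disjoint_seq x" by auto
  show "x \<longlonglongrightarrow> 0"
    unfolding tendsto_iff dist_norm diff_zero
  proof (intro allI impI)
    fix e :: real assume "e > 0"
    then obtain B where B: "lwc_set B" and near: "\<forall>a\<in>A. \<exists>b\<in>B. norm (a - b) \<le> e / 2"
      using approx[of "e / 2"] by auto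
    have "\<forall>k. \<exists>a. a \<in> A \<and> lat_abs (x k) \<le> lat_abs a"
      using x_sol by (auto simp: mem_sol_iff)
    then obtain a where a: "\<And>k. a k \<in> A \<and> lat_abs (x k) \<le> lat_abs (a k)"
      by metis
    have "\<forall>k. \<exists>b. b \<in> B \<and> norm (a k - b) \<le> e / 2"
      using a near by blast
    then obtain b where b: "\<And>k. b k \<in> B \<and> norm (a k - b k) \<le> e / 2"
      by metis
    define y where "y k = inf (lat_abs (x k)) (lat_abs (b k))" for k
    have y_nonneg: "0 \<le> y k" for k
      by (simp add: y_def lat_abs_nonneg)
    have "y k \<in> sol B" for k
    proof -
      have "lat_abs (y k) \<le> lat_abs (b k)"
        using y_nonneg[of k] by (simp add: lat_abs_of_nonneg y_def)
      then show ?thesis using b[of k] unfolding mem_sol_iff by blast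
    qed
    moreover have "disjoint_seq y"
      using x_disj y_nonneg by (rule disjoint_seq_dominated) (simp add: y_def)
    ultimately have "y \<longlonglongrightarrow> 0" using B unfolding lwc_set_def by blast
    then have "\<forall>\<^sub>F k in sequentially. norm (y k) < e / 2"
      using \<open>e > 0\<close> unfolding tendsto_iff dist_norm diff_zero by (metis half_gt_zero)
    then show "\<forall>\<^sub>F k in sequentially. norm (x k) < e"
    proof (rule eventually_mono)
      fix k assume "norm (y k) < e / 2"
      moreover have "norm (x k) \<le> norm (y k) + norm (a k - b k)"
        unfolding y_def using a[of k] by (intro norm_le_norm_inf_lat_abs_add) simp
      ultimately show "norm (x k) < e" using b[of k] by linarith
    qed
  qed
qed

lemma tendsto_blinfun_uniformly_on_bounded:
  fixes Ts :: "'i \<Rightarrow> ('a::real_normed_vector \<Rightarrow>\<^sub>L 'b::real_normed_vector)"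
  assumes "(Ts \<longlongrightarrow> T) F" "bounded A" "e > 0"
  shows "\<forall>\<^sub>F n in F. \<forall>a\<in>A. norm (Ts n a - T a) \<le> e"
proof -
  obtain M where M: "M > 0" "\<And>a. a \<in> A \<Longrightarrow> norm a \<le> M"
    using assms(2) by (meson bounded_pos)
  have "\<forall>\<^sub>F n in F. norm (Ts n - T) < e / M"
    using assms(1,3) M(1) unfolding tendsto_iff dist_norm by simp
  then show ?thesis
  proof (rule eventually_mono)
    fix n assume n: "norm (Ts n - T) < e / M"
    show "\<forall>a\<in>A. norm (Ts n a - T a) \<le> e"
    proof
      fix a assume "a \<in> A"
      have "norm (Ts n a - T a) \<le> norm (Ts n - T) * norm a"
        using norm_blinfun[of "Ts n - T" a] by (simp add: blinfun.diff_left)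
      also have "\<dots> \<le> e / M * M"
        using n M(2)[OF \<open>a \<in> A\<close>] assms(3) M(1) by (intro mult_mono) simp_all
      finally show "norm (Ts n a - T a) \<le> e" using M(1) by simp
    qed
  qed
qed

theorem proposition3p2:
  fixes Ts :: "nat \<Rightarrow> ('a::banach \<Rightarrow>\<^sub>L 'b::banach_lattice)"
    and T :: "'a \<Rightarrow>\<^sub>L 'b"
  assumes "\<And>n. limitedly_L_weakly_compact (Ts n)"
    and "Ts \<longlonglongrightarrow> T"
  shows "limitedly_L_weakly_compact T"
  unfolding limitedly_L_weakly_compact_def
proof (intro allI impI)
  fix A :: "'a set" assume "limited_set A"
  then have "bounded A" by (simp add: limited_set_def)
  show "lwc_set (T ` A)"
  proof (rule lwc_set_if_approximable)
    fix e :: real assume "e > 0"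
    then have "\<forall>\<^sub>F n in sequentially. \<forall>a\<in>A. norm (Ts n a - T a) \<le> e"
      using tendsto_blinfun_uniformly_on_bounded assms(2) \<open>bounded A\<close> by blast
    then obtain n where n: "\<forall>a\<in>A. norm (Ts n a - T a) \<le> e"
      using eventually_happens' sequentially_bot by blast
    have "lwc_set (Ts n ` A)"
      using assms(1) \<open>limited_set A\<close> unfolding limitedly_L_weakly_compact_def by blast
    moreover have "\<forall>c\<in>T ` A. \<exists>b\<in>Ts n ` A. norm (c - b) \<le> e"
      using n by (auto simp: norm_minus_commute)
    ultimately show "\<exists>B. lwc_set B \<and> (\<forall>c\<in>T ` A. \<exists>b\<in>B. norm (c - b) \<le> e)" by blast
  qed
qed

end
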